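(* Let $G=(V,\widetilde V,\mathcal E)$ be a bipartite graph with $V=\{v_1,\dots,v_r\}$, $\widetilde V=\{\tilde v_1,\dots,\tilde v_s\}$, $r\le s$, $\mathcal E\subseteq V\times\widetilde V$. Define structured matrices $\bar A\in\{0,*\}^{(s+2)\times(s+2)}$, $\bar B\in\{0,*\}^{(s+2)\times s}$, $\bar C\in\{0,*\}^{r\times(s+2)}$, $\bar K\in\{0,*\}^{s\times r}$ by: $\bar A_{ij}=*$ iff ($i=2$) or ($j=2$) or ($i\in\{3,\dots,s-r+2\}$ and $j\in\{3,\dots,s+2\}$); $\bar B_{ij}=*$ iff $i\in\{s-r+3,\dots,s+2\}$ (any $j$); $\bar C_{ij}=*$ iff $j\in\{3,\dots,s+2\}$ (any $i$); $\bar K_{ij}=*$ iff $(v_j,\tilde v_i)\in\mathcal E$. If $G$ has a perfect matching (a matching of size $r$), then the closed-loop system bipartite graph $\mathcal B(\bar A,\bar B,\bar C,\bar K)$ has a perfect matching.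
   Context: A structured matrix has entries in $\{0,*\}$. For $\bar A\in\{0,*\}^{n\times n}$, $\bar B\in\{0,*\}^{n\times m}$, $\bar C\in\{0,*\}^{p\times n}$, $\bar K\in\{0,*\}^{m\times p}$, the closed-loop system bipartite graph $\mathcal B(\bar A,\bar B,\bar C,\bar K)$ has left vertex set $\{x'_1,\dots,x'_n,u'_1,\dots,u'_m,y'_1,\dots,y'_p\}$, right vertex set $\{x_1,\dots,x_n,u_1,\dots,u_m,y_1,\dots,y_p\}$, and edges: $(x'_j,x_i)$ iff $\bar A_{ji}=*$; $(x'_i,u_j)$ iff $\bar B_{ij}=*$; $(y'_j,x_i)$ iff $\bar C_{ji}=*$; $(u'_i,y_j)$ iff $\bar K_{ij}=*$ (these are the feedback edges, set $\mathcal E_K$); $(u'_i,u_i)$ for all $i\le m$; $(y'_i,y_i)$ for all $i\le p$. A perfect matching is a matching covering every left vertex (both sides have $n+m+p$ vertices). *)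

theory Defs
  imports Main
begin

text \<open>Structured matrices over {0,*} are represented as boolean functions of
(1-based) row and column index: True means *, False means 0.\<close>
type_synonym smat = "nat \<Rightarrow> nat \<Rightarrow> bool"

definition is_matching :: "('a \<times> 'b) set \<Rightarrow> ('a \<times> 'b) set \<Rightarrow> bool" where
  "is_matching E M \<longleftrightarrow> M \<subseteq> E \<and>
     (\<forall>(a,b)\<in>M. \<forall>(a',b')\<in>M. (a = a' \<longleftrightarrow> b = b'))"

text \<open>The same constructors are used
for left vertices (x'_i, u'_i, y'_i) and right vertices (x_i, u_i, y_i); the side is
determined by the position in the edge pair (left, right).\<close>
datatype node = X nat | U nat | Y nat

definition cl_left :: "nat \<Rightarrow> nat \<Rightarrow> nat \<Rightarrow> node set" where
  "cl_left n m p = X ` {1..n} \<union> U ` {1..m} \<union> Y ` {1..p}"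

definition cl_edges :: "nat \<Rightarrow> nat \<Rightarrow> nat \<Rightarrow> smat \<Rightarrow> smat \<Rightarrow> smat \<Rightarrow> smat \<Rightarrow> (node \<times> node) set" where
  "cl_edges n m p A B C K =
     {(X j, X i) | i j. j \<in> {1..n} \<and> i \<in> {1..n} \<and> A j i}
   \<union> {(X i, U j) | i j. i \<in> {1..n} \<and> j \<in> {1..m} \<and> B i j}
   \<union> {(Y j, X i) | i j. j \<in> {1..p} \<and> i \<in> {1..n} \<and> C j i}
   \<union> {(U i, Y j) | i j. i \<in> {1..m} \<and> j \<in> {1..p} \<and> K i j}
   \<union> {(U i, U i) | i. i \<in> {1..m}}
   \<union> {(Y i, Y i) | i. i \<in> {1..p}}"

definition cl_has_perfect_matching :: "nat \<Rightarrow> nat \<Rightarrow> nat \<Rightarrow> smat \<Rightarrow> smat \<Rightarrow> smat \<Rightarrow> smat \<Rightarrow> bool" where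
  "cl_has_perfect_matching n m p A B C K \<longleftrightarrow>
     (\<exists>M. is_matching (cl_edges n m p A B C K) M \<and>
          (\<forall>l\<in>cl_left n m p. \<exists>r. (l, r) \<in> M))"

end

theory Submission
  imports Defs
begin

text \<open>Let \<sigma> be the injection {1..r} \<rightarrow> {1..s} given by the matching of G. The closed-loop
  matching pairs x'_1 and x'_2 crosswise with x_2 and x_1, shifts x'_3, ..., x'_(s-r+2)
  by r, sends y'_j to x_(j+2), sends x'_(s-r+2+j) to u_(\<sigma> j), and sends u'_i to the feedback
  partner y_j with \<sigma> j = i when i is matched and to u_i otherwise.\<close>

lemma is_matching_graph:
  assumes "inj_on f L" and "\<And>l. l \<in> L \<Longrightarrow> (l, f l) \<in> E"
  shows "is_matching E ((\<lambda>l. (l, f l)) ` L)"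
  using assms unfolding is_matching_def inj_on_def by auto

lemma cl_has_perfect_matching_if_inj_on:
  assumes "inj_on f (cl_left n m p)"
    and "\<And>l. l \<in> cl_left n m p \<Longrightarrow> (l, f l) \<in> cl_edges n m p A B C K"
  shows "cl_has_perfect_matching n m p A B C K"
  unfolding cl_has_perfect_matching_def using is_matching_graph[OF assms] by blast

lemma is_matching_card_eq_obtains_inj:
  assumes "finite L" and "fst ` E \<subseteq> L" and "is_matching E M" and "card M = card L"
  obtains \<sigma> where "inj_on \<sigma> L" and "\<And>l. l \<in> L \<Longrightarrow> (l, \<sigma> l) \<in> E"
proof -
  have M_E: "M \<subseteq> E"
    and M_inj: "\<And>a b a' b'. (a, b) \<in> M \<Longrightarrow> (a', b') \<in> M \<Longrightarrow> a = a' \<longleftrightarrow> b = b'"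
    using assms(3) unfolding is_matching_def by blast+
  have "inj_on fst M"
    using M_inj by (auto simp: inj_on_def)
  then have "card (fst ` M) = card L"
    using assms(4) by (simp add: card_image)
  moreover have "fst ` M \<subseteq> L"
    using M_E assms(2) by blast
  ultimately have "fst ` M = L"
    using assms(1) by (simp add: card_subset_eq)
  then have covered: "\<exists>b. (l, b) \<in> M" if "l \<in> L" for l
    using that by force
  define \<sigma> where "\<sigma> l = (SOME b. (l, b) \<in> M)" for l
  have \<sigma>_M: "(l, \<sigma> l) \<in> M" if "l \<in> L" for l
    unfolding \<sigma>_def using someI_ex[OF covered[OF that]] .
  have "inj_on \<sigma> L"
    using \<sigma>_M M_inj by (metis inj_onI)
  with \<sigma>_M M_E show thesis
    using that by blast
qed

definition cl_match :: "nat \<Rightarrow> nat \<Rightarrow> (nat \<Rightarrow> nat) \<Rightarrow> node \<Rightarrow> node" where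
  "cl_match r s \<sigma> l = (case l of
      X i \<Rightarrow> if i = 1 then X 2 else if i = 2 then X 1
             else if i \<le> s - r + 2 then X (i + r) else U (\<sigma> (i - (s - r + 2)))
    | U i \<Rightarrow> if i \<in> \<sigma> ` {1..r} then Y (inv_into {1..r} \<sigma> i) else U i
    | Y j \<Rightarrow> X (j + 2))"

definition cl_match_inv :: "nat \<Rightarrow> nat \<Rightarrow> (nat \<Rightarrow> nat) \<Rightarrow> node \<Rightarrow> node" where
  "cl_match_inv r s \<sigma> l = (case l of
      X i \<Rightarrow> if i = 1 then X 2 else if i = 2 then X 1
             else if i \<le> r + 2 then Y (i - 2) else X (i - r)
    | U i \<Rightarrow> if i \<in> \<sigma> ` {1..r} then X (s - r + 2 + inv_into {1..r} \<sigma> i) else U i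
    | Y j \<Rightarrow> U (\<sigma> j))"

lemma cl_match_inv_cl_match:
  assumes "r \<le> s" and "inj_on \<sigma> {1..r}" and "l \<in> cl_left (s + 2) s r"
  shows "cl_match_inv r s \<sigma> (cl_match r s \<sigma> l) = l"
proof (cases l)
  case (X i)
  show ?thesis
  proof (cases "i \<le> s - r + 2")
    case True
    moreover have "i \<ge> 1"
      using X assms(3) by (auto simp: cl_left_def)
    ultimately show ?thesis
      using X by (auto simp: cl_match_def cl_match_inv_def)
  next
    case False
    with X assms(1,3) have "i - (s - r + 2) \<in> {1..r}"
      by (auto simp: cl_left_def)
    then show ?thesis
      using X False assms(1,2) by (auto simp: cl_match_def cl_match_inv_def)
  qed
next
  case (U i)
  then show ?thesis
    by (auto simp: cl_match_def cl_match_inv_def f_inv_into_f)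
next
  case (Y j)
  then show ?thesis
    using assms(3) by (auto simp: cl_left_def cl_match_def cl_match_inv_def)
qed

lemma inj_on_cl_match:
  assumes "r \<le> s" and "inj_on \<sigma> {1..r}"
  shows "inj_on (cl_match r s \<sigma>) (cl_left (s + 2) s r)"
  using cl_match_inv_cl_match[OF assms] by (rule inj_on_inverseI)

lemma cl_match_edge:
  assumes "r \<le> s" and "E \<subseteq> {1..r} \<times> {1..s}" and "\<And>j. j \<in> {1..r} \<Longrightarrow> (j, \<sigma> j) \<in> E"
    and "l \<in> cl_left (s + 2) s r"
  shows "(l, cl_match r s \<sigma> l) \<in> cl_edges (s + 2) s r
           (\<lambda>i j. i = 2 \<or> j = 2 \<or> (i \<in> {3..s - r + 2} \<and> j \<in> {3..s + 2}))
           (\<lambda>i j. i \<in> {s - r + 3..s + 2})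
           (\<lambda>i j. j \<in> {3..s + 2})
           (\<lambda>i j. (j, i) \<in> E)"
proof (cases l)
  case (X i)
  with assms(4) have i: "i \<in> {1..s + 2}"
    by (auto simp: cl_left_def)
  show ?thesis
  proof (cases "i \<le> s - r + 2")
    case True
    with X i assms(1) show ?thesis
      by (auto simp: cl_match_def cl_edges_def)
  next
    case False
    with i assms(1) have "i - (s - r + 2) \<in> {1..r}"
      by auto
    then have "\<sigma> (i - (s - r + 2)) \<in> {1..s}"
      using assms(2,3) by blast
    with X i False show ?thesis
      by (auto simp: cl_match_def cl_edges_def)
  qed
next
  case (U i)
  with assms(4) have i: "i \<in> {1..s}"
    by (auto simp: cl_left_def)
  show ?thesis
  proof (cases "i \<in> \<sigma> ` {1..r}")
    case True
    define j where "j = inv_into {1..r} \<sigma> i"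
    have j: "j \<in> {1..r}" "\<sigma> j = i"
      unfolding j_def using True by (rule inv_into_into, rule f_inv_into_f)
    then have "(j, i) \<in> E"
      using assms(3) by blast
    moreover have "cl_match r s \<sigma> l = Y j"
      using U True by (simp add: cl_match_def j_def)
    ultimately show ?thesis
      using U i j by (auto simp: cl_edges_def)
  next
    case False
    with U i show ?thesis
      by (auto simp: cl_match_def cl_edges_def)
  qed
next
  case (Y j)
  with assms(1,4) show ?thesis
    by (auto simp: cl_left_def cl_match_def cl_edges_def)
qed

theorem lemma1:
  fixes r s :: nat and E :: "(nat \<times> nat) set"
  assumes "r \<le> s"
    and "E \<subseteq> {1..r} \<times> {1..s}"
    and "\<exists>M. is_matching E M \<and> card M = r"
  shows "cl_has_perfect_matching (s + 2) s r
           (\<lambda>i j. i = 2 \<or> j = 2 \<or> (i \<in> {3..s - r + 2} \<and> j \<in> {3..s + 2}))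
           (\<lambda>i j. i \<in> {s - r + 3..s + 2})
           (\<lambda>i j. j \<in> {3..s + 2})
           (\<lambda>i j. (j, i) \<in> E)"
proof -
  obtain M where "is_matching E M" and "card M = card {1..r}"
    using assms(3) by auto
  moreover have "fst ` E \<subseteq> {1..r}"
    using assms(2) by auto
  ultimately obtain \<sigma> where "inj_on \<sigma> {1..r}" and "\<And>j. j \<in> {1..r} \<Longrightarrow> (j, \<sigma> j) \<in> E"
    using is_matching_card_eq_obtains_inj by blast
  then show ?thesis
    using assms(1,2)
    by (intro cl_has_perfect_matching_if_inj_on[where f = "cl_match r s \<sigma>"] inj_on_cl_match
        cl_match_edge)
qed

end
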